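(* (1) For any $a,b\in\mathbb C$ with $|a|^2+|b|^2=1$, $a,b\neq0$, and any unit vectors $\ket{s_A},\ket{s_B}\in\mathbb C^2$, writing $p[\Pi(h)]=(\bra{s_A}\otimes\bra{s_B})\Pi(h)(\ket{s_A}\otimes\ket{s_B})$, $p[\Pi(\mathfrak H_{1W})]+p[\Pi(\mathfrak H_{4W})]+p[\Pi(\mathfrak H_{1X})]+p[\Pi(\mathfrak H_{4X})]+p[\Pi(\mathfrak H_{1Y})]+p[\Pi(\mathfrak H_{4Y})]+p[\Pi(\mathfrak H_{2Z})]+p[\Pi(\mathfrak H_{3Z})]\le 3.$ (2) For $a=b=1/\sqrt2$ there exists a unit vector $\ket s\in\mathbb C^2\otimes\mathbb C^2$ (necessarily of Schmidt rank two) such that $\bra s\big(\Pi(\mathfrak H_{1W})+\Pi(\mathfrak H_{4W})+\Pi(\mathfrak H_{1X})+\Pi(\mathfrak H_{4X})+\Pi(\mathfrak H_{1Y})+\Pi(\mathfrak H_{4Y})+\Pi(\mathfrak H_{2Z})+\Pi(\mathfrak H_{3Z})\big)\ket s>3$.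
   Context: In $\mathbb C^2$ let $\ket0=(0,1)^T$, $\ket1=(1,0)^T$, and let $U=\begin{pmatrix}a&b\\-\bar b&\bar a\end{pmatrix}$ with $|a|^2+|b|^2=1$, $a,b\neq0$; the same $U$ acts on both factors of $\mathbb C^2\otimes\mathbb C^2$. Define one-dimensional subspaces (span of the indicated vector): $\mathfrak H_{1W}=\langle\ket1\otimes\ket1\rangle$, $\mathfrak H_{4W}=\langle\ket0\otimes\ket0\rangle$; $\mathfrak H_{1X}=\langle\ket1\otimes U\ket1\rangle$, $\mathfrak H_{4X}=\langle\ket0\otimes U\ket0\rangle$; $\mathfrak H_{1Y}=\langle U\ket1\otimes\ket1\rangle$, $\mathfrak H_{4Y}=\langle U\ket0\otimes\ket0\rangle$; $\mathfrak H_{2Z}=\langle U\ket1\otimes U\ket0\rangle$, $\mathfrak H_{3Z}=\langle U\ket0\otimes U\ket1\rangle$. $\Pi(h)$ is the orthogonal projector onto $h$. The Schmidt rank of a vector in $\mathbb C^2\otimes\mathbb C^2$ is the least $n$ such that it is a sum of $n$ product vectors. *)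

theory Defs
  imports "HOL-Analysis.Analysis"
begin

type_synonym qubit = "complex ^ 2"
type_synonym qubit2 = "complex ^ (2 \<times> 2)"

definition mk2 :: "complex \<Rightarrow> complex \<Rightarrow> qubit" where
  "mk2 x y = (\<chi> i. if i = 1 then x else y)"

definition ket0 :: qubit where "ket0 = mk2 0 1"
definition ket1 :: qubit where "ket1 = mk2 1 0"

text \<open>U = [[a, b], [-cnj b, cnj a]] acting on a column vector\<close>
definition Uop :: "complex \<Rightarrow> complex \<Rightarrow> qubit \<Rightarrow> qubit" where
  "Uop a b v = mk2 (a * v$1 + b * v$2) (- cnj b * v$1 + cnj a * v$2)"

definition tensor :: "qubit \<Rightarrow> qubit \<Rightarrow> qubit2" where
  "tensor x y = (\<chi> p. x$(fst p) * y$(snd p))"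

definition cinner :: "complex ^ 'n \<Rightarrow> complex ^ 'n \<Rightarrow> complex" where
  "cinner u v = (\<Sum>i\<in>UNIV. cnj (u$i) * v$i)"

definition proj_span :: "complex ^ 'n \<Rightarrow> complex ^ 'n \<Rightarrow> complex ^ 'n" where
  "proj_span h w = (cinner h w / cinner h h) *s h"

definition H1W :: "complex \<Rightarrow> complex \<Rightarrow> qubit2" where "H1W a b = tensor ket1 ket1"
definition H4W :: "complex \<Rightarrow> complex \<Rightarrow> qubit2" where "H4W a b = tensor ket0 ket0"
definition H1X :: "complex \<Rightarrow> complex \<Rightarrow> qubit2" where "H1X a b = tensor ket1 (Uop a b ket1)"
definition H4X :: "complex \<Rightarrow> complex \<Rightarrow> qubit2" where "H4X a b = tensor ket0 (Uop a b ket0)"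
definition H1Y :: "complex \<Rightarrow> complex \<Rightarrow> qubit2" where "H1Y a b = tensor (Uop a b ket1) ket1"
definition H4Y :: "complex \<Rightarrow> complex \<Rightarrow> qubit2" where "H4Y a b = tensor (Uop a b ket0) ket0"
definition H2Z :: "complex \<Rightarrow> complex \<Rightarrow> qubit2" where "H2Z a b = tensor (Uop a b ket1) (Uop a b ket0)"
definition H3Z :: "complex \<Rightarrow> complex \<Rightarrow> qubit2" where "H3Z a b = tensor (Uop a b ket0) (Uop a b ket1)"

definition Hvecs :: "complex \<Rightarrow> complex \<Rightarrow> qubit2 list" where
  "Hvecs a b = [H1W a b, H4W a b, H1X a b, H4X a b, H1Y a b, H4Y a b, H2Z a b, H3Z a b]"

definition expect :: "(complex ^ 'n \<Rightarrow> complex ^ 'n) \<Rightarrow> complex ^ 'n \<Rightarrow> complex" where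
  "expect P s = cinner s (P s)"

definition Psum :: "complex \<Rightarrow> complex \<Rightarrow> qubit2 \<Rightarrow> qubit2" where
  "Psum a b w = (\<Sum>h\<leftarrow>Hvecs a b. proj_span h w)"

definition schmidt_rank :: "qubit2 \<Rightarrow> nat" where
  "schmidt_rank s = (LEAST n. \<exists>xs ys :: nat \<Rightarrow> qubit. s = (\<Sum>i<n. tensor (xs i) (ys i)))"

end

theory Submission
  imports Defs
begin

text \<open>For a product state the eight expectation values factor as products of outcome
  probabilities p, u (first qubit, measured in the standard basis and in the basis
  \<open>U|0\<rangle>, U|1\<rangle>\<close>) and q, v (second qubit). Writing \<open>\<alpha> = p\<^sub>0 - p\<^sub>1\<close>, \<open>\<beta> = u\<^sub>0 - u\<^sub>1\<close>,
  \<open>\<gamma> = q\<^sub>0 - q\<^sub>1\<close>, \<open>\<delta> = v\<^sub>0 - v\<^sub>1\<close>, the sum equals \<open>2 + (\<alpha>(\<gamma>+\<delta>) + \<beta>(\<gamma>-\<delta>))/2\<close>, and the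
  CHSH bound \<open>\<alpha>(\<gamma>+\<delta>) + \<beta>(\<gamma>-\<delta>) \<le> 2\<close> for numbers in \<open>[-1,1]\<close> gives 3. An entangled
  state escapes this bound; for \<open>a = b = 1/\<surd>2\<close> the state proportional to
  \<open>2|11\<rangle> - |10\<rangle> - |01\<rangle> - 2|00\<rangle>\<close> already reaches 17/5.\<close>

lemma mk2_nth [simp]: "mk2 x y $ 1 = x" "mk2 x y $ 2 = y"
  by (simp_all add: mk2_def)

lemma tensor_nth [simp]: "tensor x y $ (i, j) = x $ i * y $ j"
  by (simp add: tensor_def)

lemma sum_UNIV_2_times_2:
  "(\<Sum>p\<in>(UNIV :: (2 \<times> 2) set). f p) = f (1, 1) + f (1, 2) + f (2, 1) + f (2, 2)"
proof -
  have "(\<Sum>p\<in>(UNIV :: (2 \<times> 2) set). f p) = (\<Sum>i\<in>UNIV. \<Sum>j\<in>UNIV. f (i, j))"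
    by (simp flip: UNIV_Times_UNIV add: sum.cartesian_product)
  then show ?thesis
    by (simp add: sum_2 add.assoc)
qed

lemma cinner_qubit: "cinner (u :: qubit) v = cnj (u $ 1) * v $ 1 + cnj (u $ 2) * v $ 2"
  by (simp add: cinner_def sum_2)

lemma cinner_qubit2:
  "cinner (u :: qubit2) v = cnj (u $ (1, 1)) * v $ (1, 1) + cnj (u $ (1, 2)) * v $ (1, 2)
     + cnj (u $ (2, 1)) * v $ (2, 1) + cnj (u $ (2, 2)) * v $ (2, 2)"
  by (simp add: cinner_def sum_UNIV_2_times_2)

lemma cinner_commute: "cinner u v = cnj (cinner v (u :: complex ^ 'n))"
  by (simp add: cinner_def mult.commute)

lemma cinner_scale_right: "cinner u (c *s v) = c * cinner u (v :: complex ^ 'n)"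
  by (simp add: cinner_def sum_distrib_left algebra_simps)

lemma cinner_add_right: "cinner u (v + w) = cinner u v + cinner u (w :: complex ^ 'n)"
  by (simp add: cinner_def sum.distrib algebra_simps)

lemma cinner_zero_right: "cinner u (0 :: complex ^ 'n) = 0"
  by (simp add: cinner_def)

lemma cinner_sum_list_right:
  "cinner u (\<Sum>x\<leftarrow>xs. f x) = (\<Sum>x\<leftarrow>xs. cinner u (f x :: complex ^ 'n))"
  by (induction xs) (simp_all add: cinner_add_right cinner_zero_right)

lemma cinner_tensor: "cinner (tensor x y) (tensor u v) = cinner x u * cinner y v"
  by (simp add: cinner_qubit2 cinner_qubit algebra_simps)

lemma expect_proj_span:
  assumes "cinner h h = 1"
  shows "Re (expect (proj_span h) s) = cmod (cinner h s) ^ 2"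
proof -
  have "expect (proj_span h) s = cinner h s * cnj (cinner h s)"
    unfolding expect_def proj_span_def assms
    by (simp add: cinner_scale_right cinner_commute[of s h])
  then show ?thesis
    by (simp add: complex_mult_cnj cmod_def)
qed

lemma expect_proj_span_tensor:
  assumes "cinner x x = 1" "cinner y y = 1"
  shows "Re (expect (proj_span (tensor x y)) (tensor u v))
           = cmod (cinner x u) ^ 2 * cmod (cinner y v) ^ 2"
  using assms by (simp add: expect_proj_span cinner_tensor norm_mult power_mult_distrib)

lemma expect_Psum: "expect (Psum a b) s = (\<Sum>h\<leftarrow>Hvecs a b. expect (proj_span h) s)"
  unfolding expect_def Psum_def by (simp add: cinner_sum_list_right)

lemma norm_qubit_power2: "norm (x :: qubit) ^ 2 = cmod (x $ 1) ^ 2 + cmod (x $ 2) ^ 2"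
  by (simp add: norm_vec_def L2_set_def sum_2)

lemma cinner_ket0: "cinner ket0 x = x $ 2"
  and cinner_ket1: "cinner ket1 x = x $ 1"
  by (simp_all add: cinner_qubit ket0_def ket1_def)

lemma Uop_ket0: "Uop a b ket0 = mk2 b (cnj a)"
  and Uop_ket1: "Uop a b ket1 = mk2 a (- cnj b)"
  by (simp_all add: Uop_def ket0_def ket1_def)

lemma cinner_ket_self: "cinner ket0 ket0 = 1" "cinner ket1 ket1 = 1"
  by (simp_all add: cinner_qubit ket0_def ket1_def)

lemma cinner_Uop_ket_self:
  assumes "cmod a ^ 2 + cmod b ^ 2 = 1"
  shows "cinner (Uop a b ket0) (Uop a b ket0) = 1" "cinner (Uop a b ket1) (Uop a b ket1) = 1"
proof -
  have "cnj a * a + cnj b * b = of_real (cmod a ^ 2 + cmod b ^ 2)"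
    unfolding of_real_add complex_norm_square by (simp add: mult.commute)
  then have "cnj a * a + cnj b * b = 1"
    using assms by simp
  then show "cinner (Uop a b ket0) (Uop a b ket0) = 1" "cinner (Uop a b ket1) (Uop a b ket1) = 1"
    by (simp_all add: Uop_ket0 Uop_ket1 cinner_qubit algebra_simps)
qed

lemma ket_probabilities_sum:
  "cmod (cinner ket0 x) ^ 2 + cmod (cinner ket1 x) ^ 2 = norm (x :: qubit) ^ 2"
  by (simp add: cinner_ket0 cinner_ket1 norm_qubit_power2)

lemma Uop_ket_probabilities_sum:
  assumes "cmod a ^ 2 + cmod b ^ 2 = 1"
  shows "cmod (cinner (Uop a b ket0) x) ^ 2 + cmod (cinner (Uop a b ket1) x) ^ 2
           = norm (x :: qubit) ^ 2"
proof -
  have "cmod (cinner (Uop a b ket0) x) ^ 2 + cmod (cinner (Uop a b ket1) x) ^ 2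
          = (cmod a ^ 2 + cmod b ^ 2) * (cmod (x $ 1) ^ 2 + cmod (x $ 2) ^ 2)"
    unfolding Uop_ket0 Uop_ket1 cinner_qubit
    by (simp add: cmod_power2) (simp add: power2_eq_square algebra_simps)
  then show ?thesis
    using assms by (simp add: norm_qubit_power2)
qed

lemma chsh_probabilities_le_3:
  fixes p0 p1 u0 u1 q0 q1 v0 v1 :: real
  assumes "0 \<le> p0" "0 \<le> p1" "0 \<le> u0" "0 \<le> u1" "0 \<le> q0" "0 \<le> q1" "0 \<le> v0" "0 \<le> v1"
    and "p0 + p1 = 1" "u0 + u1 = 1" "q0 + q1 = 1" "v0 + v1 = 1"
  shows "p1 * q1 + p0 * q0 + p1 * v1 + p0 * v0 + u1 * q1 + u0 * q0 + u1 * v0 + u0 * v1 \<le> 3"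
proof -
  define \<alpha> \<beta> \<gamma> \<delta> where "\<alpha> = p0 - p1" "\<beta> = u0 - u1" "\<gamma> = q0 - q1" "\<delta> = v0 - v1"
  have sum_eq: "p1 * q1 + p0 * q0 + p1 * v1 + p0 * v0 + u1 * q1 + u0 * q0 + u1 * v0 + u0 * v1
                  = 2 + (\<alpha> * (\<gamma> + \<delta>) + \<beta> * (\<gamma> - \<delta>)) / 2"
  proof -
    have complements: "p1 = 1 - p0" "u1 = 1 - u0" "q1 = 1 - q0" "v1 = 1 - v0"
      using assms by auto
    show ?thesis
      unfolding \<alpha>_\<beta>_\<gamma>_\<delta>_def complements by (simp add: field_simps)
  qed
  have "x * y \<le> \<bar>y\<bar>" if "\<bar>x\<bar> \<le> 1" for x y :: real
  proof -
    have "x * y \<le> \<bar>x\<bar> * \<bar>y\<bar>"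
      by (metis abs_ge_self abs_mult)
    also have "\<dots> \<le> \<bar>y\<bar>"
      using that by (simp add: mult_left_le_one_le)
    finally show ?thesis .
  qed
  then have "\<alpha> * (\<gamma> + \<delta>) \<le> \<bar>\<gamma> + \<delta>\<bar>" "\<beta> * (\<gamma> - \<delta>) \<le> \<bar>\<gamma> - \<delta>\<bar>"
    using assms unfolding \<alpha>_\<beta>_\<gamma>_\<delta>_def by auto
  moreover have "\<bar>\<gamma> + \<delta>\<bar> + \<bar>\<gamma> - \<delta>\<bar> \<le> 2"
    using assms unfolding \<alpha>_\<beta>_\<gamma>_\<delta>_def by arith
  ultimately have "\<alpha> * (\<gamma> + \<delta>) + \<beta> * (\<gamma> - \<delta>) \<le> 2"
    by linarith
  then show ?thesis
    unfolding sum_eq by simp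
qed

lemma sum_expect_product_state_le_3:
  assumes ab: "cmod a ^ 2 + cmod b ^ 2 = 1"
    and unit: "norm (sA :: qubit) = 1" "norm (sB :: qubit) = 1"
  shows "Re (\<Sum>h\<leftarrow>Hvecs a b. expect (proj_span h) (tensor sA sB)) \<le> 3"
proof -
  define prob where "prob x s = cmod (cinner x s) ^ 2" for x s :: qubit
  let ?U0 = "Uop a b ket0" and ?U1 = "Uop a b ket1"
  have "Re (\<Sum>h\<leftarrow>Hvecs a b. expect (proj_span h) (tensor sA sB))
          = prob ket1 sA * prob ket1 sB + prob ket0 sA * prob ket0 sB
          + prob ket1 sA * prob ?U1 sB + prob ket0 sA * prob ?U0 sB
          + prob ?U1 sA * prob ket1 sB + prob ?U0 sA * prob ket0 sB
          + prob ?U1 sA * prob ?U0 sB + prob ?U0 sA * prob ?U1 sB"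
    unfolding Hvecs_def H1W_def H4W_def H1X_def H4X_def H1Y_def H4Y_def H2Z_def H3Z_def prob_def
    by (simp add: expect_proj_span_tensor cinner_ket_self cinner_Uop_ket_self[OF ab])
  also have "\<dots> \<le> 3"
  proof (rule chsh_probabilities_le_3)
    have "prob ket0 s + prob ket1 s = 1" "prob ?U0 s + prob ?U1 s = 1"
      if "norm s = 1" for s
      using that ket_probabilities_sum Uop_ket_probabilities_sum[OF ab]
      unfolding prob_def by simp_all
    then show "prob ket0 sA + prob ket1 sA = 1" "prob ?U0 sA + prob ?U1 sA = 1"
      "prob ket0 sB + prob ket1 sB = 1" "prob ?U0 sB + prob ?U1 sB = 1"
      using unit by simp_all
  qed (simp_all add: prob_def)
  finally show ?thesis .
qed

text \<open>The product vectors \<open>tensor x y\<close> are exactly the vectors whose coefficient matrix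
  has vanishing determinant.\<close>

lemma schmidt_rank_eq_2:
  assumes det: "s $ (1, 1) * s $ (2, 2) - s $ (1, 2) * s $ (2, 1) \<noteq> 0"
  shows "schmidt_rank s = 2"
  unfolding schmidt_rank_def
proof (rule Least_equality)
  let ?row = "\<lambda>i. mk2 (s $ (i, 1)) (s $ (i, 2))"
  have "s = tensor ket1 (?row 1) + tensor ket0 (?row 2)"
    by (simp add: vec_eq_iff forall_2 ket0_def ket1_def split: prod.split)
  then have "s = (\<Sum>i<2. tensor ([ket1, ket0] ! i) ([?row 1, ?row 2] ! i))"
    by (simp add: numeral_2_eq_2)
  then show "\<exists>xs ys :: nat \<Rightarrow> qubit. s = (\<Sum>i<2. tensor (xs i) (ys i))"
    by blast
next
  fix m
  assume "\<exists>xs ys :: nat \<Rightarrow> qubit. s = (\<Sum>i<m. tensor (xs i) (ys i))"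
  then obtain xs ys :: "nat \<Rightarrow> qubit" where s: "s = (\<Sum>i<m. tensor (xs i) (ys i))"
    by blast
  show "2 \<le> m"
  proof (rule ccontr)
    assume "\<not> 2 \<le> m"
    then consider "m = 0" | "m = 1"
      by linarith
    then show False
    proof cases
      case 1
      then show False using det s by simp
    next
      case 2
      then show False using det s by (simp add: algebra_simps)
    qed
  qed
qed

text \<open>Not the top eigenvector of \<open>Psum\<close> (eigenvalue \<open>2 + \<surd>2\<close>), but one with rational
  expectation value.\<close>

definition witness_state :: "real \<Rightarrow> qubit2" where
  "witness_state d = (\<chi> p. of_real d * (if p = (1, 1) then 2 else if p = (2, 2) then -2 else -1))"

lemma witness_state_nth:
  "witness_state d $ (1, 1) = of_real (2 * d)" "witness_state d $ (1, 2) = - of_real d"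
  "witness_state d $ (2, 1) = - of_real d" "witness_state d $ (2, 2) = - of_real (2 * d)"
  by (simp_all add: witness_state_def)

lemma norm_witness_state: "norm (witness_state d) = sqrt 10 * \<bar>d\<bar>"
proof -
  have "norm (witness_state d) = sqrt (10 * d ^ 2)"
    unfolding norm_vec_def L2_set_def sum_UNIV_2_times_2
    by (simp add: witness_state_nth power_mult_distrib)
  then show ?thesis
    by (simp add: real_sqrt_mult)
qed

lemma schmidt_rank_witness_state: "d \<noteq> 0 \<Longrightarrow> schmidt_rank (witness_state d) = 2"
  by (rule schmidt_rank_eq_2) (simp add: witness_state_nth power2_eq_square algebra_simps)

lemma expect_Psum_witness_state:
  fixes r d :: real
  assumes r: "r ^ 2 = 1 / 2" and d: "d ^ 2 = 1 / 10"
  shows "Re (expect (Psum (of_real r) (of_real r)) (witness_state d)) = 17 / 5"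
proof -
  have "cmod (of_real r) ^ 2 + cmod (of_real r) ^ 2 = 1"
    using r by simp
  note unit = cinner_Uop_ket_self[OF this] cinner_ket_self
  show ?thesis
    unfolding expect_Psum Hvecs_def H1W_def H4W_def H1X_def H4X_def H1Y_def H4Y_def H2Z_def H3Z_def
    apply (simp add: expect_proj_span cinner_tensor unit)
    apply (simp only: Uop_ket0 Uop_ket1)
    apply (simp add: cinner_qubit2 witness_state_nth ket0_def ket1_def cmod_power2)
    apply (simp add: power_mult_distrib r d)
    done
qed

theorem mainTheorem8:
  shows "(\<forall>(a::complex) (b::complex) (sA::qubit) (sB::qubit).
            cmod a ^ 2 + cmod b ^ 2 = 1 \<longrightarrow> a \<noteq> 0 \<longrightarrow> b \<noteq> 0 \<longrightarrow>
            norm sA = 1 \<longrightarrow> norm sB = 1 \<longrightarrow>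
            Re (\<Sum>h\<leftarrow>Hvecs a b. expect (proj_span h) (tensor sA sB)) \<le> 3)
       \<and> (\<exists>s::qubit2. norm s = 1 \<and> schmidt_rank s = 2 \<and>
            Re (expect (Psum (1 / sqrt 2) (1 / sqrt 2)) s) > 3)"
proof (intro conjI allI impI)
  show "Re (\<Sum>h\<leftarrow>Hvecs a b. expect (proj_span h) (tensor sA sB)) \<le> 3"
    if "cmod a ^ 2 + cmod b ^ 2 = 1" "norm sA = 1" "norm sB = 1" for a b and sA sB :: qubit
    using sum_expect_product_state_le_3 that by blast
  define d :: real where "d = 1 / sqrt 10"
  have d: "d ^ 2 = 1 / 10" "d \<noteq> 0"
    by (simp_all add: d_def power_divide)
  have r: "(1 / sqrt 2) ^ 2 = (1 / 2 :: real)" and "1 / complex_of_real (sqrt 2) = of_real (1 / sqrt 2)"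
    by (simp_all add: power_divide)
  then have "Re (expect (Psum (1 / sqrt 2) (1 / sqrt 2)) (witness_state d)) = 17 / 5"
    using expect_Psum_witness_state[OF r d(1)] by simp
  moreover have "norm (witness_state d) = 1"
    by (simp add: norm_witness_state d_def)
  ultimately show "\<exists>s::qubit2. norm s = 1 \<and> schmidt_rank s = 2 \<and>
                     Re (expect (Psum (1 / sqrt 2) (1 / sqrt 2)) s) > 3"
    using schmidt_rank_witness_state[OF d(2)] by force
qed

end
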